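(* Let $f_0,f_1:\mathbb{R}\to\mathbb{R}$ be functions such that the restrictions $f_0|_{[0,1/3]}:[0,1/3]\to[0,1]$ and $f_1|_{[2/3,1]}:[2/3,1]\to[0,1]$ are bijective, $|f_0(x)|\ge 1$ for every $x\in(-\infty,0]\cup[2/3,\infty)$, and $|f_1(x)|\ge 1$ for every $x\in(-\infty,1/3]\cup[1,\infty)$. For $\sigma=\sigma_1\sigma_2\cdots\sigma_n\in\{0,1\}^n$ let $f_\sigma=f_{\sigma_n}\circ\cdots\circ f_{\sigma_2}\circ f_{\sigma_1}$. Then for every $n\ge 1$ there is a function $\alpha_n:\{0,1\}^n\to(0,1)$ such that: (i) $\alpha_n(\sigma)\in[0,1/3]$ if $\sigma_1=0$; (ii) $\alpha_n(\sigma)\in[2/3,1]$ if $\sigma_1=1$; (iii) for all $\sigma,\tau\in\{0,1\}^n$, $\alpha_n(\sigma)=\alpha_n(\tau)$ iff $\sigma=\tau$; (iv) for all $\sigma,\tau\in\{0,1\}^n$, $f_\sigma(\alpha_n(\tau))=0$ iff $\sigma=\tau$. *)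

theory Defs
  imports Complex_Main
begin

text \<open>Words sigma in {0,1}^n are bool lists of length n (False = 0, True = 1),
  with hd sigma = sigma_1. The composition f_sigma applies f_{sigma_1} first:
  f_sigma = f_{sigma_n} o ... o f_{sigma_1}.\<close>

fun fword :: "(real \<Rightarrow> real) \<Rightarrow> (real \<Rightarrow> real) \<Rightarrow> bool list \<Rightarrow> real \<Rightarrow> real" where
  "fword f0 f1 [] = id"
| "fword f0 f1 (b # s) = fword f0 f1 s \<circ> (if b then f1 else f0)"

end

theory Submission
  imports Defs
begin

text \<open>Pull 0 back along the inverse branches: \<open>\<alpha>(\<tau>) = g\<^sub>\<tau>\<^sub>1 (\<dots> (g\<^sub>\<tau>\<^sub>n 0))\<close>, where \<open>g\<^sub>b\<close> is the
  inverse of the bijective branch of \<open>f\<^sub>b\<close>. Then \<open>f\<^sub>\<tau>\<close> retraces this orbit back to 0. If \<open>\<sigma> \<noteq> \<tau>\<close>, then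
  at the first letter where they differ the orbit of \<open>\<alpha>(\<tau>)\<close> lies in the branch interval of the
  other map, which sends it into \<open>{y. \<bar>y\<bar> \<ge> 1}\<close>; this set is invariant under both maps, so
  \<open>f\<^sub>\<sigma>(\<alpha>(\<tau>)) \<noteq> 0\<close>. Injectivity of \<open>\<alpha>\<close> follows, and the endpoint conditions keep \<open>\<alpha>\<close> away
  from 0 and 1.\<close>

lemma fword_preserves:
  assumes "\<And>x. x \<in> A \<Longrightarrow> f0 x \<in> A" and "\<And>x. x \<in> A \<Longrightarrow> f1 x \<in> A" and "x \<in> A"
  shows "fword f0 f1 s x \<in> A"
  using assms(3) by (induction s arbitrary: x) (auto intro: assms(1,2))

locale expanding_branches =
  fixes f0 f1 :: "real \<Rightarrow> real"
  assumes bij0: "bij_betw f0 {0..1/3} {0..1}"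
    and bij1: "bij_betw f1 {2/3..1} {0..1}"
    and escape0: "\<And>x. x \<le> 0 \<or> x \<ge> 2/3 \<Longrightarrow> \<bar>f0 x\<bar> \<ge> 1"
    and escape1: "\<And>x. x \<le> 1/3 \<or> x \<ge> 1 \<Longrightarrow> \<bar>f1 x\<bar> \<ge> 1"
begin

definition branch :: "bool \<Rightarrow> real \<Rightarrow> real" where
  "branch b = (if b then f1 else f0)"

definition branch_interval :: "bool \<Rightarrow> real set" where
  "branch_interval b = (if b then {2/3..1} else {0..1/3})"

definition inv_branch :: "bool \<Rightarrow> real \<Rightarrow> real" where
  "inv_branch b = the_inv_into (branch_interval b) (branch b)"

lemma bij_betw_branch: "bij_betw (branch b) (branch_interval b) {0..1}"
  using bij0 bij1 by (simp add: branch_def branch_interval_def)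

lemma inv_branch_mem:
  "y \<in> {0..1} \<Longrightarrow> inv_branch b y \<in> branch_interval b"
  unfolding inv_branch_def
  using bij_betw_apply[OF bij_betw_the_inv_into[OF bij_betw_branch]] by blast

lemma branch_inv_branch:
  "y \<in> {0..1} \<Longrightarrow> branch b (inv_branch b y) = y"
  unfolding inv_branch_def using bij_betw_branch by (rule f_the_inv_into_f_bij_betw)

lemma escape_other_branch:
  "x \<in> branch_interval c \<Longrightarrow> b \<noteq> c \<Longrightarrow> \<bar>branch b x\<bar> \<ge> 1"
  using escape0 escape1 by (cases b) (auto simp: branch_def branch_interval_def)

lemma inv_branch_mem_open:
  assumes "y \<in> {0..<1}"
  shows "inv_branch b y \<in> {0<..<1}"
proof -
  let ?x = "inv_branch b y"
  have x: "?x \<in> branch_interval b" and fx: "branch b ?x = y"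
    using assms inv_branch_mem branch_inv_branch by auto
  have "?x \<noteq> (if b then 1 else 0)" \<comment> \<open>these endpoints lie in the escape regions\<close>
    using fx assms escape0[of 0] escape1[of 1] by (cases b) (auto simp: branch_def)
  with x show ?thesis by (cases b) (auto simp: branch_interval_def)
qed

lemma fword_escapes:
  assumes "\<bar>x\<bar> \<ge> 1"
  shows "\<bar>fword f0 f1 s x\<bar> \<ge> 1"
proof -
  have "\<bar>f0 y\<bar> \<ge> 1" "\<bar>f1 y\<bar> \<ge> 1" if "\<bar>y\<bar> \<ge> 1" for y
  proof -
    from that have "y \<le> 0 \<or> y \<ge> 1"
      by linarith
    then show "\<bar>f0 y\<bar> \<ge> 1" "\<bar>f1 y\<bar> \<ge> 1"
      using escape0[of y] escape1[of y] by auto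
  qed
  then show ?thesis
    using fword_preserves[of "{y. \<bar>y\<bar> \<ge> 1}"] assms by blast
qed

fun itinerary_point :: "bool list \<Rightarrow> real" where
  "itinerary_point [] = 0"
| "itinerary_point (b # s) = inv_branch b (itinerary_point s)"

lemma itinerary_point_mem: "itinerary_point s \<in> {0..<1}"
proof (induction s)
  case (Cons b s)
  then show ?case
    using inv_branch_mem_open[of "itinerary_point s" b] by simp
qed simp

lemma itinerary_point_Cons_mem_open: "itinerary_point (b # s) \<in> {0<..<1}"
  using inv_branch_mem_open itinerary_point_mem by simp

lemma itinerary_point_Cons_mem_branch_interval: "itinerary_point (b # s) \<in> branch_interval b"
  using inv_branch_mem[of "itinerary_point s" b] itinerary_point_mem[of s] by simp

lemma fword_itinerary_point_eq_0_iff: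
  "length \<sigma> = length \<tau> \<Longrightarrow> fword f0 f1 \<sigma> (itinerary_point \<tau>) = 0 \<longleftrightarrow> \<sigma> = \<tau>"
proof (induction \<sigma> arbitrary: \<tau>)
  case Nil
  then show ?case by simp
next
  case (Cons b s)
  then obtain c t where \<tau>: "\<tau> = c # t" and "length s = length t"
    by (cases \<tau>) auto
  have first_letter:
    "fword f0 f1 (b # s) (itinerary_point \<tau>) = fword f0 f1 s (branch b (itinerary_point (c # t)))"
    by (simp add: \<tau> branch_def)
  show ?case
  proof (cases "b = c")
    case True
    then have "branch b (itinerary_point (c # t)) = itinerary_point t"
      using branch_inv_branch[of "itinerary_point t" c] itinerary_point_mem[of t] by simp
    then show ?thesis
      unfolding first_letter using Cons.IH[OF \<open>length s = length t\<close>] True \<tau> by simp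
  next
    case False
    then have "\<bar>branch b (itinerary_point (c # t))\<bar> \<ge> 1"
      using escape_other_branch itinerary_point_Cons_mem_branch_interval by blast
    then have "\<bar>fword f0 f1 s (branch b (itinerary_point (c # t)))\<bar> \<ge> 1"
      by (rule fword_escapes)
    then have "fword f0 f1 (b # s) (itinerary_point \<tau>) \<noteq> 0"
      unfolding first_letter by auto
    with False \<tau> show ?thesis by simp
  qed
qed

lemma itinerary_point_eq_iff:
  "length \<sigma> = length \<tau> \<Longrightarrow> itinerary_point \<sigma> = itinerary_point \<tau> \<longleftrightarrow> \<sigma> = \<tau>"
  using fword_itinerary_point_eq_0_iff[of \<sigma> \<sigma>] fword_itinerary_point_eq_0_iff[of \<sigma> \<tau>] by auto

end

theorem lemma2:
  fixes f0 f1 :: "real \<Rightarrow> real" and n :: nat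
  assumes "bij_betw f0 {0..1/3} {0..1}"
    and "bij_betw f1 {2/3..1} {0..1}"
    and "\<And>x. x \<le> 0 \<or> x \<ge> 2/3 \<Longrightarrow> \<bar>f0 x\<bar> \<ge> 1"
    and "\<And>x. x \<le> 1/3 \<or> x \<ge> 1 \<Longrightarrow> \<bar>f1 x\<bar> \<ge> 1"
    and "n \<ge> 1"
  shows "\<exists>\<alpha> :: bool list \<Rightarrow> real.
           (\<forall>\<sigma>. length \<sigma> = n \<longrightarrow> \<alpha> \<sigma> \<in> {0<..<1}) \<and>
           (\<forall>\<sigma>. length \<sigma> = n \<longrightarrow> \<not> hd \<sigma> \<longrightarrow> \<alpha> \<sigma> \<in> {0..1/3}) \<and>
           (\<forall>\<sigma>. length \<sigma> = n \<longrightarrow> hd \<sigma> \<longrightarrow> \<alpha> \<sigma> \<in> {2/3..1}) \<and>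
           (\<forall>\<sigma> \<tau>. length \<sigma> = n \<longrightarrow> length \<tau> = n \<longrightarrow> (\<alpha> \<sigma> = \<alpha> \<tau> \<longleftrightarrow> \<sigma> = \<tau>)) \<and>
           (\<forall>\<sigma> \<tau>. length \<sigma> = n \<longrightarrow> length \<tau> = n \<longrightarrow> (fword f0 f1 \<sigma> (\<alpha> \<tau>) = 0 \<longleftrightarrow> \<sigma> = \<tau>))"
proof -
  interpret expanding_branches f0 f1
    using assms(1-4) by unfold_locales
  show ?thesis
  proof (intro exI[of _ itinerary_point] conjI allI impI)
    fix \<sigma> :: "bool list"
    assume "length \<sigma> = n"
    then obtain b s where \<sigma>: "\<sigma> = b # s"
      using assms(5) by (cases \<sigma>) auto
    show "itinerary_point \<sigma> \<in> {0<..<1}"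
      using itinerary_point_Cons_mem_open \<sigma> by simp
    show "itinerary_point \<sigma> \<in> {0..1/3}" if "\<not> hd \<sigma>"
      using itinerary_point_Cons_mem_branch_interval[of b s] that \<sigma>
      by (simp add: branch_interval_def)
    show "itinerary_point \<sigma> \<in> {2/3..1}" if "hd \<sigma>"
      using itinerary_point_Cons_mem_branch_interval[of b s] that \<sigma>
      by (simp add: branch_interval_def)
  next
    fix \<sigma> \<tau> :: "bool list"
    assume "length \<sigma> = n" "length \<tau> = n"
    then show "itinerary_point \<sigma> = itinerary_point \<tau> \<longleftrightarrow> \<sigma> = \<tau>"
      and "fword f0 f1 \<sigma> (itinerary_point \<tau>) = 0 \<longleftrightarrow> \<sigma> = \<tau>"
      using itinerary_point_eq_iff fword_itinerary_point_eq_0_iff by simp_all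
  qed
qed

end
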